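(* Let $0\le\alpha\le\beta\le\pi/2$ and $P_1,P_2>0$, and define $\mathcal R(\theta)$ as in the context. Then for every $\theta\in\mathbb R$ there exists $\theta'\in[\alpha,\beta]$ with $\mathcal R(\theta)\subseteq\mathcal R(\theta')$. In particular, for a two-hop MAC with two relay nodes, to obtain the first outer bound it suffices to take $\theta\in[\alpha,\beta]$.
   Context: Let $\mathcal C(x)=\frac12\log_2(1+x)$, $\phi_1(\theta)=P_1\cos^2(\theta-\alpha)$, $\phi_2(\theta)=P_2\cos^2(\theta-\beta)$, $\phi=\phi_1+\phi_2$, and $\mathcal R(\theta)=\{(R_1,R_2)\ge0:R_1\le\mathcal C(\phi_1(\theta)),R_2\le\mathcal C(\phi_2(\theta)),R_1+R_2\le\mathcal C(\phi(\theta))\}$. In a two-user two-hop MAC with two relays (source-to-relay channel vectors $\mathbf h_{01},\mathbf h_{02}\in\mathbb R^2$ with positive entries, source powers $P_{S_i}$, relay gains $\mathbf B$, relay-to-destination vector $\mathbf h_1$), writing $\mathbf h_{0i}/\|\mathbf h_{0i}\|$ and $\mathbf B\mathbf h_1/\|\mathbf B\mathbf h_1\|$ as $(\cos\alpha,\sin\alpha)$, $(\cos\beta,\sin\beta)$, $(\cos\theta,\sin\theta)$ and $P_i=\|\mathbf h_{0i}\|^2P_{S_i}$, the first outer-bound rate set (destination noise omitted) of the AF scheme $\mathbf B$ equals $\mathcal R(\theta)$. *)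

theory Defs
  imports Complex_Main
begin

definition capC :: "real \<Rightarrow> real" where
  "capC x = (1/2) * log 2 (1 + x)"

definition phi1 :: "real \<Rightarrow> real \<Rightarrow> real \<Rightarrow> real" where
  "phi1 P1 \<alpha> \<theta> = P1 * (cos (\<theta> - \<alpha>))^2"

definition phi2 :: "real \<Rightarrow> real \<Rightarrow> real \<Rightarrow> real" where
  "phi2 P2 \<beta> \<theta> = P2 * (cos (\<theta> - \<beta>))^2"

definition rate_region :: "real \<Rightarrow> real \<Rightarrow> real \<Rightarrow> real \<Rightarrow> real \<Rightarrow> (real \<times> real) set" where
  "rate_region P1 P2 \<alpha> \<beta> \<theta> =
     {(R1, R2). 0 \<le> R1 \<and> 0 \<le> R2 \<and>
        R1 \<le> capC (phi1 P1 \<alpha> \<theta>) \<and>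
        R2 \<le> capC (phi2 P2 \<beta> \<theta>) \<and>
        R1 + R2 \<le> capC (phi1 P1 \<alpha> \<theta> + phi2 P2 \<beta> \<theta>)}"

end

theory Submission
  imports Defs
begin

text \<open>Both gains depend on \<theta> only through squared cosines, so \<theta> may be reduced modulo \<pi>
  to \<open>t \<in> [\<alpha>, \<alpha> + \<pi>)\<close>, and a region with pointwise larger gains contains the smaller one.
  If \<open>t \<le> \<beta>\<close> we are done. If \<open>t\<close> lies just beyond \<beta>, reflecting it to \<open>2\<beta> - t\<close> keeps
  the second gain and moves \<open>t\<close> closer to \<alpha>, which increases the first. Otherwise \<open>t - \<beta>\<close>
  is at least \<open>\<beta> - \<alpha>\<close> away from a multiple of \<pi>, and \<open>\<theta>' = \<alpha>\<close> maximises the first gain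
  while not decreasing the second.\<close>

lemma capC_mono: "0 \<le> x \<Longrightarrow> x \<le> y \<Longrightarrow> capC x \<le> capC y"
  unfolding capC_def by simp

lemma cos_power2_add_int_pi: "cos (x + of_int k * pi) ^ 2 = cos x ^ 2"
  by (simp add: cos_add mult.commute[of _ pi] power_mult_distrib)

lemma exists_int_shift_into_interval:
  fixes p :: real
  assumes "p > 0"
  obtains k :: int where "a \<le> x - of_int k * p" "x - of_int k * p < a + p"
proof
  define k where "k = \<lfloor>(x - a) / p\<rfloor>"
  have "of_int k * p \<le> x - a" "x - a < (of_int k + 1) * p"
    using floor_divide_lower[OF assms] floor_divide_upper[OF assms] unfolding k_def by auto
  then show "a \<le> x - of_int k * p" "x - of_int k * p < a + p"
    by (auto simp: algebra_simps)
qed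

lemma rate_region_shift_int_pi:
  "rate_region P1 P2 \<alpha> \<beta> (\<theta> + of_int k * pi) = rate_region P1 P2 \<alpha> \<beta> \<theta>"
proof -
  have "phi1 P1 \<alpha> (\<theta> + of_int k * pi) = phi1 P1 \<alpha> \<theta>"
    using cos_power2_add_int_pi[of "\<theta> - \<alpha>" k] by (simp add: phi1_def algebra_simps)
  moreover have "phi2 P2 \<beta> (\<theta> + of_int k * pi) = phi2 P2 \<beta> \<theta>"
    using cos_power2_add_int_pi[of "\<theta> - \<beta>" k] by (simp add: phi2_def algebra_simps)
  ultimately show ?thesis
    unfolding rate_region_def by simp
qed

lemma rate_region_mono:
  assumes "0 \<le> P1" "0 \<le> P2"
    and "phi1 P1 \<alpha> \<theta> \<le> phi1 P1 \<alpha> \<theta>'" "phi2 P2 \<beta> \<theta> \<le> phi2 P2 \<beta> \<theta>'"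
  shows "rate_region P1 P2 \<alpha> \<beta> \<theta> \<subseteq> rate_region P1 P2 \<alpha> \<beta> \<theta>'"
proof -
  have "0 \<le> phi1 P1 \<alpha> \<theta>" "0 \<le> phi2 P2 \<beta> \<theta>"
    using assms by (simp_all add: phi1_def phi2_def)
  with assms have "capC (phi1 P1 \<alpha> \<theta>) \<le> capC (phi1 P1 \<alpha> \<theta>')"
    and "capC (phi2 P2 \<beta> \<theta>) \<le> capC (phi2 P2 \<beta> \<theta>')"
    and "capC (phi1 P1 \<alpha> \<theta> + phi2 P2 \<beta> \<theta>) \<le> capC (phi1 P1 \<alpha> \<theta>' + phi2 P2 \<beta> \<theta>')"
    by (auto intro: capC_mono)
  then show ?thesis
    unfolding rate_region_def by auto
qed

lemma cos_power2_add_le_cos_power2_diff: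
  assumes "0 \<le> d" "d \<le> pi / 2" "0 \<le> s" "s \<le> pi / 2"
  shows "cos (d + s) ^ 2 \<le> cos (d - s) ^ 2"
proof -
  have "0 \<le> sin d" "0 \<le> cos d" "0 \<le> sin s" "0 \<le> cos s"
    using assms by (auto intro!: sin_ge_zero cos_ge_zero)
  then have "0 \<le> 4 * (cos d * cos s * sin d * sin s)"
    by simp
  also have "4 * (cos d * cos s * sin d * sin s) = cos (d - s) ^ 2 - cos (d + s) ^ 2"
    by (simp add: cos_diff cos_add power2_eq_square algebra_simps)
  finally show ?thesis
    by simp
qed

lemma cos_power2_le_cos_power2:
  assumes "0 \<le> d" "d \<le> s" "s \<le> pi - d"
  shows "cos s ^ 2 \<le> cos d ^ 2"
proof (cases "s \<le> pi / 2")
  case True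
  with assms have "cos s \<le> cos d" "0 \<le> cos s"
    by (auto intro!: cos_monotone_0_pi_le cos_ge_zero)
  then show ?thesis
    by (simp add: power_mono)
next
  case False
  have "cos (pi - s) \<le> cos d" "0 \<le> cos (pi - s)"
    using False assms by (intro cos_monotone_0_pi_le cos_ge_zero; simp)+
  then have "cos (pi - s) ^ 2 \<le> cos d ^ 2"
    by (rule power_mono)
  then show ?thesis
    by simp
qed

lemma gains_dominated_on_period:
  assumes "0 \<le> \<alpha>" "\<alpha> \<le> \<beta>" "\<beta> \<le> pi / 2" "0 \<le> P1" "0 \<le> P2"
    and "\<alpha> \<le> t" "t < \<alpha> + pi"
  obtains \<theta>' where "\<theta>' \<in> {\<alpha>..\<beta>}"
    "phi1 P1 \<alpha> t \<le> phi1 P1 \<alpha> \<theta>'" "phi2 P2 \<beta> t \<le> phi2 P2 \<beta> \<theta>'"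
proof -
  consider "t \<le> \<beta>" | "\<beta> < t" "t - \<beta> < \<beta> - \<alpha>" | "\<beta> - \<alpha> \<le> t - \<beta>"
    by linarith
  then show ?thesis
  proof cases
    case 1
    then show ?thesis
      using assms that[of t] by auto
  next
    case 2
    have "cos ((\<beta> - \<alpha>) + (t - \<beta>)) ^ 2 \<le> cos ((\<beta> - \<alpha>) - (t - \<beta>)) ^ 2"
      using 2 assms by (intro cos_power2_add_le_cos_power2_diff) auto
    then have "phi1 P1 \<alpha> t \<le> phi1 P1 \<alpha> (2 * \<beta> - t)"
      using assms by (simp add: phi1_def mult_left_mono algebra_simps)
    moreover have "phi2 P2 \<beta> t = phi2 P2 \<beta> (2 * \<beta> - t)"
      using cos_minus[of "t - \<beta>"] by (simp add: phi2_def algebra_simps)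
    ultimately show ?thesis
      using 2 that[of "2 * \<beta> - t"] by auto
  next
    case 3
    have "cos (t - \<beta>) ^ 2 \<le> cos (\<beta> - \<alpha>) ^ 2"
      using 3 assms by (intro cos_power2_le_cos_power2) auto
    then have "phi2 P2 \<beta> t \<le> phi2 P2 \<beta> \<alpha>"
      using assms cos_minus[of "\<alpha> - \<beta>"] by (simp add: phi2_def mult_left_mono)
    moreover have "cos (t - \<alpha>) ^ 2 \<le> 1"
      using abs_cos_le_one[of "t - \<alpha>"] by (simp add: abs_square_le_1)
    then have "phi1 P1 \<alpha> t \<le> phi1 P1 \<alpha> \<alpha>"
      using assms by (simp add: phi1_def mult_left_le)
    ultimately show ?thesis
      using assms that[of \<alpha>] by auto
  qed
qed

theorem lemma3:
  fixes \<alpha> \<beta> P1 P2 :: real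
  assumes "0 \<le> \<alpha>" "\<alpha> \<le> \<beta>" "\<beta> \<le> pi / 2"
    and "P1 > 0" "P2 > 0"
  shows "\<forall>\<theta>::real. \<exists>\<theta>'\<in>{\<alpha>..\<beta>}.
           rate_region P1 P2 \<alpha> \<beta> \<theta> \<subseteq> rate_region P1 P2 \<alpha> \<beta> \<theta>'"
proof
  fix \<theta> :: real
  obtain k :: int where k: "\<alpha> \<le> \<theta> - of_int k * pi" "\<theta> - of_int k * pi < \<alpha> + pi"
    using exists_int_shift_into_interval[OF pi_gt_zero] by blast
  define t where "t = \<theta> - of_int k * pi"
  have "rate_region P1 P2 \<alpha> \<beta> \<theta> = rate_region P1 P2 \<alpha> \<beta> t"
    using rate_region_shift_int_pi[of P1 P2 \<alpha> \<beta> t k] by (simp add: t_def)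
  moreover obtain \<theta>' where "\<theta>' \<in> {\<alpha>..\<beta>}"
    "phi1 P1 \<alpha> t \<le> phi1 P1 \<alpha> \<theta>'" "phi2 P2 \<beta> t \<le> phi2 P2 \<beta> \<theta>'"
    using gains_dominated_on_period[of \<alpha> \<beta> P1 P2 t] assms k unfolding t_def by auto
  ultimately show "\<exists>\<theta>'\<in>{\<alpha>..\<beta>}. rate_region P1 P2 \<alpha> \<beta> \<theta> \<subseteq> rate_region P1 P2 \<alpha> \<beta> \<theta>'"
    using assms rate_region_mono[of P1 P2 \<alpha> t \<theta>' \<beta>] by auto
qed

end
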